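(* Consider the coded distributed inference model below with decoding at the users. For any coding scheme, the total latency $\tau_u=\mathbb{E}[L_c]+\mathbb{E}[L_{dec}^u]+\mathbb{E}[L_d^u]$ satisfies $$\tau_u\ \ge\ \mathbb{E}\Big[\min_{p\in\{k,\dots,e\mu k\}}\big(\underline{L}_c(\Lambda,p)+\underline{L}_d^u(p)\big)\Big],$$ where the expectation is over the straggling times $\Lambda=(\Lambda_1,\dots,\Lambda_e)$.
   Context: Model: $e$ edge nodes, $u$ users, a $k\times r$ matrix over $\mathrm{GF}(q)$, storage parameter $\mu$ with $\mu k\in\mathbb{N}$, product time $\delta>0$, transmission rate $\nu>0$. Straggling times $\Lambda_1,\dots,\Lambda_e$ are i.i.d. exponential with mean $\beta$. A coding scheme stores $s$ coded rows at each edge node, with $k/e\le s\le\mu k$, and for each realization $\lambda$ of $\Lambda$ stops after a total number $P=P(\lambda)\in\{k,\dots,es\}$ of computed products; the computed products include $v\ge k$ distinct products, the $i$th computed $m_i\ge1$ times, with $\sum_i m_i=P$. Edge node $j$ has completed $\min\{\lfloor (t-\lambda_j)^+/\delta\rfloor, s\}$ products at time $t$, and the computation latency is $L_c=\min\{t\ge0:\sum_{j=1}^e\min\{\lfloor (t-\lambda_j)^+/\delta\rfloor,s\}\ge P\}$. The downlink latency is $L_d^u=\frac{u\log_2(q)}{\nu}\sum_i 1/m_i$, and the decoding latency $L_{dec}^u\ge 0$. Here $(x)^+=\max\{x,0\}$, $\underline{L}_c(\lambda,p)=\min\{t\ge0:\sum_{j=1}^e\min\{\lfloor (t-\lambda_j)^+/\delta\rfloor,\mu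 k\}\ge p\}$, and $\underline{L}_d^u(p)=\frac{u\log_2 q}{\nu}\frac{k^2}{p}$ if $p/k\in\mathbb{N}$, and $\underline{L}_d^u(p)=\frac{u\log_2 q}{\nu}\big(\frac{\lceil p/k\rceil k-p}{\lfloor p/k\rfloor}+\frac{p-k\lfloor p/k\rfloor}{\lceil p/k\rceil}\big)$ otherwise. *)

theory Defs
  imports "HOL-Probability.Probability"
begin

definition pos_part :: "real \<Rightarrow> real" where
  "pos_part x = max x 0"

text \<open>Joint law of the straggling times: e i.i.d. exponential random variables with
  mean beta (rate 1/beta), as a product measure on functions indexed by {..<e}.\<close>
definition straggle_measure :: "nat \<Rightarrow> real \<Rightarrow> (nat \<Rightarrow> real) measure" where
  "straggle_measure e \<beta> =
     PiM {..<e} (\<lambda>_. density lborel (exponential_density (1 / \<beta>)))"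

definition expect :: "'a measure \<Rightarrow> ('a \<Rightarrow> real) \<Rightarrow> ennreal" where
  "expect M f = (\<integral>\<^sup>+ x. ennreal (f x) \<partial>M)"

text \<open>Computation latency L_c of a scheme storing s rows per node and stopping after P products.\<close>
definition L_c :: "nat \<Rightarrow> real \<Rightarrow> nat \<Rightarrow> (nat \<Rightarrow> real) \<Rightarrow> nat \<Rightarrow> real" where
  "L_c e \<delta> s lam P =
     Inf {t. 0 \<le> t \<and>
            (\<Sum>j<e. min (nat \<lfloor>pos_part (t - lam j) / \<delta>\<rfloor>) s) \<ge> P}"

definition L_c_lower :: "nat \<Rightarrow> real \<Rightarrow> real \<Rightarrow> nat \<Rightarrow> (nat \<Rightarrow> real) \<Rightarrow> nat \<Rightarrow> real" where
  "L_c_lower e \<delta> \<mu> k lam p =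
     Inf {t. 0 \<le> t \<and>
            (\<Sum>j<e. min (real (nat \<lfloor>pos_part (t - lam j) / \<delta>\<rfloor>)) (\<mu> * real k)) \<ge> real p}"

text \<open>Downlink latency with v distinct products, the i-th computed m i times.\<close>
definition L_d :: "nat \<Rightarrow> nat \<Rightarrow> real \<Rightarrow> nat \<Rightarrow> (nat \<Rightarrow> nat) \<Rightarrow> real" where
  "L_d u q \<nu> v m = real u * log 2 (real q) / \<nu> * (\<Sum>i<v. 1 / real (m i))"

definition L_d_lower :: "nat \<Rightarrow> nat \<Rightarrow> real \<Rightarrow> nat \<Rightarrow> nat \<Rightarrow> real" where
  "L_d_lower u q \<nu> k p =
     (if real p / real k \<in> \<nat>
      then real u * log 2 (real q) / \<nu> * (real k ^ 2 / real p)
      else real u * log 2 (real q) / \<nu> *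
        ((real (nat \<lceil>real p / real k\<rceil> * k) - real p) / real (nat \<lfloor>real p / real k\<rfloor>)
         + (real p - real k * real (nat \<lfloor>real p / real k\<rfloor>)) / real (nat \<lceil>real p / real k\<rceil>)))"

end

theory Submission imports Defs begin

text \<open>For a fixed realization \<open>\<lambda>\<close> of the straggling times, the number of products
  \<open>P(\<lambda>)\<close> is itself an admissible value of \<open>p\<close>. Raising the per-node storage from \<open>s\<close>
  to \<open>\<mu>k\<close> can only speed up the computation, so \<open>L_c_lower(\<lambda>, P) \<le> L_c\<close>. For the
  downlink, the multiplicities \<open>m\<^sub>i \<ge> 1\<close> sum to \<open>P\<close> over \<open>v \<ge> k\<close> distinct products;
  by convexity of \<open>1/x\<close>, each \<open>1/m\<^sub>i\<close> lies above the secant through \<open>\<lfloor>P/k\<rfloor>\<close> and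
  \<open>\<lfloor>P/k\<rfloor> + 1\<close>, and summing gives exactly the balanced value \<open>L_d_lower(P)\<close>.
  Hence the minimum over \<open>p\<close> is pointwise below \<open>L_c + L_d\<close>, and integrating yields
  the bound. Since neither \<open>L_c\<close> nor \<open>L_d\<close> is assumed measurable, the integration uses
  subadditivity of the lower integral when only one summand is measurable.\<close>

lemma ennreal_add_le: "ennreal (a + b) \<le> ennreal a + ennreal b"
proof (cases "a \<ge> 0 \<and> b \<ge> 0")
  case False
  then have "a + b \<le> a \<or> a + b \<le> b" by auto
  then show ?thesis
    by (metis add.commute add_increasing2 ennreal_leI zero_le)
qed (simp add: ennreal_plus)

lemma nn_integral_add_le:
  fixes f g :: "'a \<Rightarrow> ennreal"
  assumes g: "g \<in> borel_measurable M" and g_finite: "\<And>x. g x < top"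
  shows "integral\<^sup>N M (\<lambda>x. f x + g x) \<le> integral\<^sup>N M f + integral\<^sup>N M g"
proof (subst nn_integral_def[of M "\<lambda>x. f x + g x"], rule SUP_least, safe)
  fix s assume s: "simple_function M s" "s \<le> (\<lambda>x. f x + g x)"
  have s_meas: "s \<in> borel_measurable M" using s(1) by (rule borel_measurable_simple_function)
  \<comment> \<open>Split \<open>s\<close> into its measurable part below \<open>g\<close> and a remainder below \<open>f\<close>.\<close>
  have "integral\<^sup>S M s = integral\<^sup>N M s" using s(1) by (simp add: nn_integral_eq_simple_integral)
  also have "\<dots> = integral\<^sup>N M (\<lambda>x. min (s x) (g x) + (s x - min (s x) (g x)))"
    by (intro nn_integral_cong) (simp add: add_diff_inverse_ennreal)
  also have "\<dots> = integral\<^sup>N M (\<lambda>x. min (s x) (g x)) + integral\<^sup>N M (\<lambda>x. s x - min (s x) (g x))"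
    using s_meas g by (intro nn_integral_add) auto
  also have "\<dots> \<le> integral\<^sup>N M g + integral\<^sup>N M f"
  proof (intro add_mono nn_integral_mono)
    fix x
    show "min (s x) (g x) \<le> g x" by simp
    have "s x \<le> f x + g x" using s(2) by (simp add: le_fun_def)
    then show "s x - min (s x) (g x) \<le> f x"
      using g_finite[of x]
      by (cases "s x \<le> g x") (auto simp: ennreal_minus_le_iff min_def add.commute)
  qed
  finally show "integral\<^sup>S M s \<le> integral\<^sup>N M f + integral\<^sup>N M g" by (simp add: add.commute)
qed

lemma finite_nat_real_le: "finite {p :: nat. real p \<le> c}"
proof (rule finite_subset)
  show "{p :: nat. real p \<le> c} \<subseteq> {..nat \<lceil>c\<rceil>}"
  proof
    fix p assume "p \<in> {p :: nat. real p \<le> c}"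
    then have "\<lceil>real p\<rceil> \<le> \<lceil>c\<rceil>" using ceiling_mono[of "real p" c] by simp
    then show "p \<in> {..nat \<lceil>c\<rceil>}" by simp
  qed
qed simp

lemma inverse_nat_ge_secant:
  fixes a m :: nat assumes "a \<ge> 1" "m \<ge> 1"
  shows "1 / real a + 1 / real (a + 1) - real m / (real a * real (a + 1)) \<le> 1 / real m"
proof -
  have "(real m - a) * (real m - (a + 1)) \<ge> 0"
  proof (cases "m \<le> a")
    case True then show ?thesis by (intro mult_nonpos_nonpos) auto
  next
    case False then show ?thesis by (intro mult_nonneg_nonneg) auto
  qed
  moreover have "(real m - a) * (real m - (a + 1)) / (real a * real m * real (a + 1))
     = 1 / real m - (1 / real a + 1 / real (a + 1) - real m / (real a * real (a + 1)))"
    using assms by (simp add: divide_simps) algebra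
  ultimately show ?thesis
    by (metis diff_ge_0_iff_ge divide_nonneg_nonneg of_nat_0_le_iff mult_nonneg_nonneg)
qed

lemma sum_inverse_ge_balanced:
  fixes m :: "nat \<Rightarrow> nat" and k v p :: nat
  assumes "k \<ge> 1" "v \<ge> k" "\<And>i. i < v \<Longrightarrow> m i \<ge> 1" "(\<Sum>i<v. m i) = p"
  shows "(real k - real (p mod k)) / real (p div k) + real (p mod k) / real (p div k + 1)
         \<le> (\<Sum>i<v. 1 / real (m i))"
proof -
  define a where "a = p div k"
  define r where "r = p mod k"
  have "v \<le> p" using assms(3,4) sum_mono[of "{..<v}" "\<lambda>_. 1::nat" m] by auto
  then have a_pos: "a \<ge> 1" using assms(1,2) div_le_mono[of k p k] unfolding a_def by simp
  have p_eq: "real p = real a * real k + real r" unfolding a_def r_def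
    by (metis of_nat_add of_nat_mult div_mult_mod_eq)
  define c where "c = 1 / real a + 1 / real (a + 1)"
  have "(real k - real r) / real a + real r / real (a + 1)
      = real k * c - real p / (real a * real (a + 1))"
    using a_pos unfolding p_eq c_def by (simp add: divide_simps) algebra
  also have "\<dots> \<le> real v * c - real p / (real a * real (a + 1))"
    using assms(2) by (simp add: c_def mult_right_mono)
  also have "\<dots> = (\<Sum>i<v. c - real (m i) / (real a * real (a + 1)))"
    using assms(4) by (simp add: sum_subtractf sum_divide_distrib[symmetric] flip: of_nat_sum)
  also have "\<dots> \<le> (\<Sum>i<v. 1 / real (m i))"
    unfolding c_def by (intro sum_mono inverse_nat_ge_secant a_pos assms(3)) auto
  finally show ?thesis unfolding a_def r_def .
qed

lemma L_d_lower_div_mod: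
  assumes "k \<ge> 1" "p \<ge> k"
  shows "L_d_lower u q \<nu> k p = real u * log 2 (real q) / \<nu> *
     ((real k - real (p mod k)) / real (p div k) + real (p mod k) / real (p div k + 1))"
proof (cases "real p / real k \<in> \<nat>")
  case True
  then obtain n where "real p / real k = real n" by (auto elim: Nats_cases)
  then have p_eq: "p = n * k" using assms(1)
    by (simp add: divide_eq_eq flip: of_nat_mult)
  then have "n \<ge> 1" using assms by (cases n) auto
  have "p mod k = 0" "p div k = n" using p_eq assms(1) by auto
  then show ?thesis using True p_eq assms(1) \<open>n \<ge> 1\<close> unfolding L_d_lower_def
    by (simp add: power2_eq_square field_simps)
next
  case False
  have floor_eq: "\<lfloor>real p / real k\<rfloor> = int (p div k)"
    by (metis floor_divide_of_nat_eq of_int_of_nat_eq)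
  have "real p / real k \<noteq> of_int \<lfloor>real p / real k\<rfloor>"
    using False unfolding floor_eq by (metis of_int_of_nat_eq of_nat_in_Nats)
  then have ceiling_eq: "\<lceil>real p / real k\<rceil> = int (p div k) + 1"
    by (subst ceiling_altdef) (simp add: floor_eq)
  have p_eq: "real p = real (p div k) * real k + real (p mod k)"
    by (metis of_nat_add of_nat_mult div_mult_mod_eq)
  show ?thesis using False unfolding L_d_lower_def floor_eq ceiling_eq
    by (simp add: nat_add_distrib p_eq algebra_simps)
qed

lemma L_d_lower_le_L_d:
  assumes "k \<ge> 1" "v \<ge> k" "\<And>i. i < v \<Longrightarrow> m i \<ge> 1" "(\<Sum>i<v. m i) = p"
    and "q \<ge> 1" "\<nu> > 0"
  shows "L_d_lower u q \<nu> k p \<le> L_d u q \<nu> v m"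
proof -
  have "k \<le> p" using assms(2,3,4) sum_mono[of "{..<v}" "\<lambda>_. 1::nat" m] by auto
  have "0 \<le> real u * log 2 (real q) / \<nu>" using assms(5,6) by simp
  then show ?thesis
    unfolding L_d_lower_div_mod[OF assms(1) \<open>k \<le> p\<close>] L_d_def
    using assms(1-4) by (intro mult_left_mono sum_inverse_ge_balanced) auto
qed

lemma L_c_all_products_done:
  assumes "\<delta> > 0"
  obtains t where "0 \<le> t" "(\<Sum>j<e. min (nat \<lfloor>pos_part (t - lam j) / \<delta>\<rfloor>) s) = e * s"
proof
  define t where "t = \<delta> * real s + (\<Sum>j<e. \<bar>lam j\<bar>)"
  show "0 \<le> t" unfolding t_def using assms by (simp add: sum_nonneg)
  have "s \<le> nat \<lfloor>pos_part (t - lam j) / \<delta>\<rfloor>" if "j < e" for j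
  proof -
    have "\<bar>lam j\<bar> \<le> (\<Sum>j<e. \<bar>lam j\<bar>)" using that by (intro member_le_sum) auto
    then have "\<delta> * real s \<le> pos_part (t - lam j)"
      unfolding t_def pos_part_def by linarith
    then have "real s \<le> pos_part (t - lam j) / \<delta>" using assms by (simp add: field_simps)
    then show ?thesis by (simp add: le_nat_iff le_floor_iff)
  qed
  then show "(\<Sum>j<e. min (nat \<lfloor>pos_part (t - lam j) / \<delta>\<rfloor>) s) = e * s"
    by (simp add: min_absorb2)
qed

lemma L_c_lower_le_L_c:
  assumes "\<delta> > 0" "real s \<le> \<mu> * real k" "p \<le> e * s"
  shows "L_c_lower e \<delta> \<mu> k lam p \<le> L_c e \<delta> s lam p"
  unfolding L_c_lower_def L_c_def
proof (rule cInf_superset_mono)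
  obtain t where "0 \<le> t" "(\<Sum>j<e. min (nat \<lfloor>pos_part (t - lam j) / \<delta>\<rfloor>) s) = e * s"
    using L_c_all_products_done assms(1) .
  then show "{t. 0 \<le> t \<and> p \<le> (\<Sum>j<e. min (nat \<lfloor>pos_part (t - lam j) / \<delta>\<rfloor>) s)} \<noteq> {}"
    using assms(3) by auto
  show "bdd_below {t. 0 \<le> t \<and>
      real p \<le> (\<Sum>j<e. min (real (nat \<lfloor>pos_part (t - lam j) / \<delta>\<rfloor>)) (\<mu> * real k))}"
    by (rule bdd_belowI[of _ 0]) auto
  show "{t. 0 \<le> t \<and> p \<le> (\<Sum>j<e. min (nat \<lfloor>pos_part (t - lam j) / \<delta>\<rfloor>) s)}
    \<subseteq> {t. 0 \<le> t \<and>
      real p \<le> (\<Sum>j<e. min (real (nat \<lfloor>pos_part (t - lam j) / \<delta>\<rfloor>)) (\<mu> * real k))}"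
  proof safe
    fix t assume "p \<le> (\<Sum>j<e. min (nat \<lfloor>pos_part (t - lam j) / \<delta>\<rfloor>) s)"
    then have "real p \<le> (\<Sum>j<e. real (min (nat \<lfloor>pos_part (t - lam j) / \<delta>\<rfloor>) s))"
      by (metis of_nat_le_iff of_nat_sum)
    also have "\<dots> \<le> (\<Sum>j<e. min (real (nat \<lfloor>pos_part (t - lam j) / \<delta>\<rfloor>)) (\<mu> * real k))"
      using assms(2) by (intro sum_mono) auto
    finally show "real p \<le> (\<Sum>j<e. min (real (nat \<lfloor>pos_part (t - lam j) / \<delta>\<rfloor>)) (\<mu> * real k))" .
  qed
qed

lemma Min_latency_lower_le:
  assumes "\<delta> > 0" "real s \<le> \<mu> * real k" "k \<le> p" "p \<le> e * s"
  shows "Min ((\<lambda>p. L_c_lower e \<delta> \<mu> k lam p + L_d_lower u q \<nu> k p) `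
                {p. k \<le> p \<and> real p \<le> real e * \<mu> * real k})
         \<le> L_c e \<delta> s lam p + L_d_lower u q \<nu> k p"
proof -
  have "real p \<le> real e * real s" using assms(4) by (metis of_nat_le_iff of_nat_mult)
  also have "\<dots> \<le> real e * (\<mu> * real k)" using assms(2) by (intro mult_left_mono) auto
  finally have "p \<in> {p. k \<le> p \<and> real p \<le> real e * \<mu> * real k}"
    using assms(3) by (simp add: mult.assoc)
  moreover have "finite {p. k \<le> p \<and> real p \<le> real e * \<mu> * real k}"
    by (rule finite_subset[OF _ finite_nat_real_le]) auto
  ultimately have "Min ((\<lambda>p. L_c_lower e \<delta> \<mu> k lam p + L_d_lower u q \<nu> k p) `
                {p. k \<le> p \<and> real p \<le> real e * \<mu> * real k})
      \<le> L_c_lower e \<delta> \<mu> k lam p + L_d_lower u q \<nu> k p"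
    by (intro Min_le) auto
  also have "\<dots> \<le> L_c e \<delta> s lam p + L_d_lower u q \<nu> k p"
    using L_c_lower_le_L_c[OF assms(1,2,4)] by simp
  finally show ?thesis .
qed

theorem theorem1:
  fixes e u k r q :: nat and \<mu> \<delta> \<nu> \<beta> :: real
    and s :: nat
    and P v :: "(nat \<Rightarrow> real) \<Rightarrow> nat"
    and m :: "(nat \<Rightarrow> real) \<Rightarrow> nat \<Rightarrow> nat"
    and L_dec :: "(nat \<Rightarrow> real) \<Rightarrow> real"
  assumes "e \<ge> 1" and "u \<ge> 1" and "k \<ge> 1" and "r \<ge> 1"
    and "\<exists>p n. prime p \<and> n \<ge> 1 \<and> q = p ^ n"
    and "\<mu> > 0" and "\<mu> * real k \<in> \<nat>"
    and "\<delta> > 0" and "\<nu> > 0" and "\<beta> > 0"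
    and "real k / real e \<le> real s" and "real s \<le> \<mu> * real k"
    and "\<And>x. x \<in> space (straggle_measure e \<beta>) \<Longrightarrow> k \<le> P x \<and> P x \<le> e * s"
    and "\<And>x. x \<in> space (straggle_measure e \<beta>) \<Longrightarrow> k \<le> v x"
    and "\<And>x i. x \<in> space (straggle_measure e \<beta>) \<Longrightarrow> i < v x \<Longrightarrow> 1 \<le> m x i"
    and "\<And>x. x \<in> space (straggle_measure e \<beta>) \<Longrightarrow> (\<Sum>i<v x. m x i) = P x"
    and "\<And>x. x \<in> space (straggle_measure e \<beta>) \<Longrightarrow> 0 \<le> L_dec x"
    and "P \<in> measurable (straggle_measure e \<beta>) (count_space UNIV)"
  shows "expect (straggle_measure e \<beta>) (\<lambda>x. L_c e \<delta> s x (P x))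
         + expect (straggle_measure e \<beta>) L_dec
         + expect (straggle_measure e \<beta>) (\<lambda>x. L_d u q \<nu> (v x) (m x))
       \<ge> expect (straggle_measure e \<beta>)
           (\<lambda>x. Min ((\<lambda>p. L_c_lower e \<delta> \<mu> k x p + L_d_lower u q \<nu> k p) `
                      {p. k \<le> p \<and> real p \<le> real e * \<mu> * real k}))"
proof -
  let ?M = "straggle_measure e \<beta>"
  obtain p n where "prime p" "q = p ^ n" using assms(5) by blast
  then have "q \<ge> 1" by (simp add: Suc_le_eq prime_gt_0_nat)
  have "expect ?M (\<lambda>x. Min ((\<lambda>p. L_c_lower e \<delta> \<mu> k x p + L_d_lower u q \<nu> k p) `
                      {p. k \<le> p \<and> real p \<le> real e * \<mu> * real k}))
     \<le> (\<integral>\<^sup>+ x. ennreal (L_c e \<delta> s x (P x)) + ennreal (L_d_lower u q \<nu> k (P x)) \<partial>?M)"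
    unfolding expect_def using assms(8,12,13)
    by (intro nn_integral_mono order_trans[OF ennreal_leI ennreal_add_le] Min_latency_lower_le)
      auto
  also have "\<dots> \<le> (\<integral>\<^sup>+ x. ennreal (L_c e \<delta> s x (P x)) \<partial>?M)
        + (\<integral>\<^sup>+ x. ennreal (L_d_lower u q \<nu> k (P x)) \<partial>?M)"
    by (intro nn_integral_add_le measurable_compose[OF assms(18)]) simp_all
  also have "\<dots> \<le> (\<integral>\<^sup>+ x. ennreal (L_c e \<delta> s x (P x)) \<partial>?M)
        + (\<integral>\<^sup>+ x. ennreal (L_d u q \<nu> (v x) (m x)) \<partial>?M)"
    using L_d_lower_le_L_d[OF assms(3,14,15,16) \<open>q \<ge> 1\<close> assms(9)]
    by (intro add_left_mono nn_integral_mono ennreal_leI) auto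
  also have "\<dots> \<le> expect ?M (\<lambda>x. L_c e \<delta> s x (P x)) + expect ?M L_dec
         + expect ?M (\<lambda>x. L_d u q \<nu> (v x) (m x))"
    unfolding expect_def by (simp add: add.commute add.left_commute)
  finally show ?thesis .
qed

end
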